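(* Suppose $p_j=1$ for all $j\in[n]$. Then for any constant $\epsilon\in(0,1)$ and any $\alpha\in(0,1)$, IPR with $\rho=2$ is a $(1+\epsilon)(1+\alpha)$-consistent and $(2+1/\alpha)$-robust partitioning algorithm.
   Context: Scheduling with Speed Predictions (SSP). An instance consists of $n$ jobs with processing times $p_1,\dots,p_n\ge 0$ and $m$ machines with true speeds $s_1,\dots,s_m>0$; processing job $j$ on machine $i$ takes time $p_j/s_i$. For a bag (set of jobs) $B$, $p(B)=\sum_{j\in B}p_j$. In the partitioning stage the algorithm receives $\mathbf p$ and predicted speeds $\hat{\mathbf s}\ge0$ (not $\mathbf s$) and partitions $[n]$ into $m$ possibly empty bags. In the scheduling stage $\mathbf s$ is revealed and each bag is assigned whole to a machine; the makespan is $\max_i(\text{total processing time on } i)/s_i$. $opt(\mathbf p,\mathbf s)$ is the minimum makespan of assigning individual jobs knowing $\mathbf s$. A partitioning algorithm is $c$-consistent (resp. $\beta$-robust) if the two-stage algorithm that runs it and then assigns the bags to machines with minimum possible makespan has makespan at most $c\cdot opt(\mathbf p,\mathbf s)$ whenever $\hat{\mathbf s}=\mathbf s$ (resp. at most $\beta\cdot opt(\mathbf p,\mathbf s)$ for all $\mathbf p,\hat{\mathbf s},\mathbf s$). Algorithm IPR. Input: predicted speeds $\hat s_1\ge\dots\ge\hat s_m$, $\mathbf p$, $\alpha$, accuracy $\epsilon\in(0,1)$, $\rho\ge1$. (1) Compute a partition $B_1,\dots,B_m$ with $p(B_1)\ge\dots\ge p(B_m)$ such that putting $B_i$ on machine $i$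 has makespan at most $(1+\epsilon)opt(\mathbf p,\hat{\mathbf s})$ under speeds $\hat{\mathbf s}$. (2) Set $\overline{OPT}_C=\max_i p(B_i)/\hat s_i$ and $\mathcal M_i=\{B_i\}$. (3) While $\max\{p(B): B\in\cup_i\mathcal M_i, |B|\ge2\}>\rho\min\{p(B):B\in\cup_i\mathcal M_i\}$: compute $\mathcal M'=$ LPT-Rebalance$(\mathcal M)$; if $\max_i\sum_{B\in\mathcal M'_i}p(B)/\hat s_i>(1+\alpha)\overline{OPT}_C$ return the current bags $\cup_i\mathcal M_i$; else $\mathcal M\leftarrow\mathcal M'$. (4) Return the bags $\cup_i\mathcal M_i$. LPT-Rebalance: let $B_{\min}$ be a bag of minimum $p(B)$ over all bags, $\mathcal M_{\min}$ its collection, and $\mathcal M_{\max}$ a collection containing a bag of maximum $p(B)$ among bags with at least two jobs. Move $B_{\min}$ into $\mathcal M_{\max}$; let $\ell=|\mathcal M_{\max}|$; pool the jobs of $\mathcal M_{\max}$ and redistribute them into $\ell$ new bags by LPT (jobs in non-increasing processing time, each into a currently least-loaded bag); these form the new $\mathcal M_{\max}$. *)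

theory Defs
  imports "HOL-Analysis.Analysis" "HOL-Library.FuncSet"
begin

(* Jobs are 0..<n, machines are 0..<m, bag labels are 0..<m.
   Processing times p :: nat => real, speeds sp :: nat => real. *)

(* time needed to process load L on a machine of speed sp; speed 0 (allowed for
   predicted speeds) gives infinite time unless the load is 0 *)
definition ptime :: "real \<Rightarrow> real \<Rightarrow> ereal" where
  "ptime L sp = (if sp > 0 then ereal (L / sp) else if L = 0 then 0 else \<infinity>)"

definition load :: "nat \<Rightarrow> (nat \<Rightarrow> real) \<Rightarrow> (nat \<Rightarrow> nat) \<Rightarrow> nat \<Rightarrow> real" where
  "load n p f i = (\<Sum>j | j < n \<and> f j = i. p j)"

definition makespan :: "nat \<Rightarrow> nat \<Rightarrow> (nat \<Rightarrow> real) \<Rightarrow> (nat \<Rightarrow> real) \<Rightarrow> (nat \<Rightarrow> nat) \<Rightarrow> ereal" where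
  "makespan n m p sp f = Max ((\<lambda>i. ptime (load n p f i) (sp i)) ` {..<m})"

definition opt :: "nat \<Rightarrow> nat \<Rightarrow> (nat \<Rightarrow> real) \<Rightarrow> (nat \<Rightarrow> real) \<Rightarrow> ereal" where
  "opt n m p sp = Min (makespan n m p sp ` ({..<n} \<rightarrow>\<^sub>E {..<m}))"

(* A partition of the jobs into m (possibly empty) bags is a map beta from jobs to
   bag labels < m; bag k is the set of jobs with label k. *)
definition bag :: "nat \<Rightarrow> (nat \<Rightarrow> nat) \<Rightarrow> nat \<Rightarrow> nat set" where
  "bag n \<beta> k = {j. j < n \<and> \<beta> j = k}"

definition psum :: "(nat \<Rightarrow> real) \<Rightarrow> nat set \<Rightarrow> real" where
  "psum p B = (\<Sum>j\<in>B. p j)"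

(* scheduling stage: assign whole bags to machines (sigma) with minimum makespan *)
definition bag_makespan :: "nat \<Rightarrow> nat \<Rightarrow> (nat \<Rightarrow> real) \<Rightarrow> (nat \<Rightarrow> real) \<Rightarrow> (nat \<Rightarrow> nat) \<Rightarrow> ereal" where
  "bag_makespan n m p sp \<beta> = Min ((\<lambda>\<sigma>. makespan n m p sp (\<sigma> \<circ> \<beta>)) ` ({..<m} \<rightarrow>\<^sub>E {..<m}))"

(* Step (1) of IPR: bags B_0,...,B_{m-1} with non-increasing p(B_i) such that
   putting B_i on machine i has makespan <= (1+eps) opt(p, sh) under speeds sh *)
definition ipr_init :: "nat \<Rightarrow> nat \<Rightarrow> (nat \<Rightarrow> real) \<Rightarrow> (nat \<Rightarrow> real) \<Rightarrow> real \<Rightarrow> (nat \<Rightarrow> nat) \<Rightarrow> bool" where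
  "ipr_init n m p sh \<epsilon> \<beta> \<longleftrightarrow>
     (\<forall>j<n. \<beta> j < m) \<and>
     (\<forall>i. Suc i < m \<longrightarrow> psum p (bag n \<beta> (Suc i)) \<le> psum p (bag n \<beta> i)) \<and>
     makespan n m p sh \<beta> \<le> ereal (1 + \<epsilon>) * opt n m p sh"

definition loop_cond :: "nat \<Rightarrow> nat \<Rightarrow> (nat \<Rightarrow> real) \<Rightarrow> real \<Rightarrow> (nat \<Rightarrow> nat) \<Rightarrow> bool" where
  "loop_cond n m p \<rho> \<beta> \<longleftrightarrow>
     (let K2 = {k. k < m \<and> card (bag n \<beta> k) \<ge> 2} in
        K2 \<noteq> {} \<and>
        Max ((\<lambda>k. psum p (bag n \<beta> k)) ` K2) > \<rho> * Min ((\<lambda>k. psum p (bag n \<beta> k)) ` {..<m}))"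

(* LPT: the jobs js (in list order, non-increasing processing time) are each put into a
   currently least-loaded bag among the labels L (ties broken arbitrarily) *)
definition lpt_assign :: "(nat \<Rightarrow> real) \<Rightarrow> nat set \<Rightarrow> nat list \<Rightarrow> (nat \<Rightarrow> nat) \<Rightarrow> bool" where
  "lpt_assign p L js a \<longleftrightarrow>
     distinct js \<and> sorted_wrt (\<lambda>x y. p y \<le> p x) js \<and>
     (\<forall>t<length js. a (js ! t) \<in> L \<and>
        (\<forall>k\<in>L. (\<Sum>j | j \<in> set (take t js) \<and> a j = a (js ! t). p j)
                 \<le> (\<Sum>j | j \<in> set (take t js) \<and> a j = k. p j)))"

(* State of IPR: (beta, c): beta maps jobs to bag labels, c maps bag labels to the
   index of the collection M_i containing that bag.  LPT-Rebalance as a relation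
   (all admissible choices of B_min, M_max and tie-breaking). *)
definition lpt_rebalance :: "nat \<Rightarrow> nat \<Rightarrow> (nat \<Rightarrow> real) \<Rightarrow>
    (nat \<Rightarrow> nat) \<times> (nat \<Rightarrow> nat) \<Rightarrow> (nat \<Rightarrow> nat) \<times> (nat \<Rightarrow> nat) \<Rightarrow> bool" where
  "lpt_rebalance n m p st st' \<longleftrightarrow>
     (let \<beta> = fst st; c = snd st; \<beta>' = fst st'; c' = snd st' in
     (\<exists>kmin kmax js.
        kmin < m \<and> (\<forall>k<m. psum p (bag n \<beta> kmin) \<le> psum p (bag n \<beta> k)) \<and>
        kmax < m \<and> card (bag n \<beta> kmax) \<ge> 2 \<and>
        (\<forall>k<m. card (bag n \<beta> k) \<ge> 2 \<longrightarrow> psum p (bag n \<beta> k) \<le> psum p (bag n \<beta> kmax)) \<and>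
        c' = c(kmin := c kmax) \<and>
        set js = {j. j < n \<and> \<beta> j \<in> {k. k < m \<and> c' k = c kmax}} \<and>
        lpt_assign p {k. k < m \<and> c' k = c kmax} js \<beta>' \<and>
        (\<forall>j. j < n \<and> j \<notin> set js \<longrightarrow> \<beta>' j = \<beta> j)))"

(* makespan under sh of the collections: machine i gets all bags of M_i *)
definition coll_makespan :: "nat \<Rightarrow> nat \<Rightarrow> (nat \<Rightarrow> real) \<Rightarrow> (nat \<Rightarrow> real) \<Rightarrow>
    (nat \<Rightarrow> nat) \<times> (nat \<Rightarrow> nat) \<Rightarrow> ereal" where
  "coll_makespan n m p sh st = makespan n m p sh (snd st \<circ> fst st)"

(* one accepted iteration of the while loop (OPTC = \<overline>{OPT}_C) *)
definition ipr_step :: "nat \<Rightarrow> nat \<Rightarrow> (nat \<Rightarrow> real) \<Rightarrow> (nat \<Rightarrow> real) \<Rightarrow> real \<Rightarrow> real \<Rightarrow> ereal \<Rightarrow>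
    (nat \<Rightarrow> nat) \<times> (nat \<Rightarrow> nat) \<Rightarrow> (nat \<Rightarrow> nat) \<times> (nat \<Rightarrow> nat) \<Rightarrow> bool" where
  "ipr_step n m p sh \<alpha> \<rho> OPTC st st' \<longleftrightarrow>
     loop_cond n m p \<rho> (fst st) \<and> lpt_rebalance n m p st st' \<and>
     \<not> (coll_makespan n m p sh st' > ereal (1 + \<alpha>) * OPTC)"

inductive ipr_run :: "nat \<Rightarrow> nat \<Rightarrow> (nat \<Rightarrow> real) \<Rightarrow> (nat \<Rightarrow> real) \<Rightarrow> real \<Rightarrow> real \<Rightarrow> ereal \<Rightarrow>
    (nat \<Rightarrow> nat) \<times> (nat \<Rightarrow> nat) \<Rightarrow> (nat \<Rightarrow> nat) \<Rightarrow> bool"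
  for n m p sh \<alpha> \<rho> OPTC where
  stop: "\<not> loop_cond n m p \<rho> (fst st) \<Longrightarrow> ipr_run n m p sh \<alpha> \<rho> OPTC st (fst st)"
| reject: "loop_cond n m p \<rho> (fst st) \<Longrightarrow> lpt_rebalance n m p st st' \<Longrightarrow>
     coll_makespan n m p sh st' > ereal (1 + \<alpha>) * OPTC \<Longrightarrow> ipr_run n m p sh \<alpha> \<rho> OPTC st (fst st)"
| cont: "ipr_step n m p sh \<alpha> \<rho> OPTC st st' \<Longrightarrow> ipr_run n m p sh \<alpha> \<rho> OPTC st' out \<Longrightarrow>
     ipr_run n m p sh \<alpha> \<rho> OPTC st out"

definition ipr_output :: "nat \<Rightarrow> nat \<Rightarrow> (nat \<Rightarrow> real) \<Rightarrow> (nat \<Rightarrow> real) \<Rightarrow> real \<Rightarrow> real \<Rightarrow> real \<Rightarrow>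
    (nat \<Rightarrow> nat) \<Rightarrow> bool" where
  "ipr_output n m p sh \<epsilon> \<alpha> \<rho> out \<longleftrightarrow>
     (\<exists>\<beta>0. ipr_init n m p sh \<epsilon> \<beta>0 \<and> ipr_run n m p sh \<alpha> \<rho> (makespan n m p sh \<beta>0) (\<beta>0, id) out)"

end

theory Submission
  imports Defs
begin

text \<open>
  With unit jobs a bag is described by its size. IPR keeps the bags of every collection
  balanced (their sizes differ by at most one), because LPT deals out unit jobs evenly.
  A rebalancing step merges the smallest bag, of size \<open>a\<close>, into the collection of the
  largest bag, whose size exceeds \<open>2a\<close>; afterwards every bag of that collection has size at
  least \<open>a + 1\<close>. Hence the minimum bag size never decreases and each step either raises it
  or removes one minimum bag, so the loop terminates.

  Consistency is immediate from the makespan test of the loop. For robustness, the invariant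
  \<open>p(M\<^sub>i) \<le> OPT\<^sub>C \<cdot> sh i + (|M\<^sub>i| - 1) \<cdot> a\<close> (\<open>sh\<close> the predicted speeds) bounds the collection
  receiving the smallest bag, so a rejected step forces the largest bag to have size at most
  \<open>(1 + 1/\<alpha>) a + 1\<close>. Together with the stopping rule, either every bag has at most one job
  or all bag sizes lie within the factor \<open>2 + 1/\<alpha>\<close> of the smallest one. Such bags can be
  placed, largest first, against an optimal assignment of the jobs so that no machine gets
  more than \<open>2 + 1/\<alpha>\<close> times its optimal number of jobs.
\<close>

section \<open>Makespans\<close>

lemma finite_bag [simp]: "finite (bag n \<beta> k)"
  by (simp add: bag_def)

lemma ptime_nonneg: "0 \<le> L \<Longrightarrow> 0 \<le> ptime L sp"
  by (auto simp: ptime_def)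

lemma ptime_le_ereal_iff:
  assumes "0 \<le> L" "0 \<le> sp" "0 \<le> X"
  shows "ptime L sp \<le> ereal X \<longleftrightarrow> L \<le> X * sp"
  using assms by (auto simp: ptime_def pos_divide_le_eq)

lemma load_nonneg: "\<forall>j<n. 0 \<le> p j \<Longrightarrow> 0 \<le> load n p f i"
  by (auto simp: load_def intro: sum_nonneg)

lemma makespan_le_iff:
  assumes "1 \<le> m"
  shows "makespan n m p sp f \<le> Y \<longleftrightarrow> (\<forall>i<m. ptime (load n p f i) (sp i) \<le> Y)"
  using assms by (auto simp: makespan_def lessThan_empty_iff)

lemma ptime_le_makespan: "i < m \<Longrightarrow> ptime (load n p f i) (sp i) \<le> makespan n m p sp f"
  unfolding makespan_def by (rule Max_ge) auto

lemma makespan_nonneg: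
  assumes "1 \<le> m" "\<forall>j<n. 0 \<le> p j"
  shows "0 \<le> makespan n m p sp f"
proof -
  have "0 \<le> ptime (load n p f 0) (sp 0)" using assms(2) by (intro ptime_nonneg load_nonneg)
  also have "\<dots> \<le> makespan n m p sp f" using assms(1) by (intro ptime_le_makespan) simp
  finally show ?thesis .
qed

lemma makespan_cong: "\<forall>j<n. f j = g j \<Longrightarrow> makespan n m p sp f = makespan n m p sp g"
  unfolding makespan_def load_def
  by (intro arg_cong[where f = Max] image_cong refl arg_cong2[where f = ptime] sum.cong) auto

lemma opt_attained:
  assumes "1 \<le> m"
  obtains f where "f \<in> {..<n} \<rightarrow>\<^sub>E {..<m}" "opt n m p sp = makespan n m p sp f"
proof -
  have "{..<n} \<rightarrow>\<^sub>E {..<m} \<noteq> {}"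
    using assms by (auto simp: PiE_eq_empty_iff lessThan_empty_iff)
  then have "opt n m p sp \<in> makespan n m p sp ` ({..<n} \<rightarrow>\<^sub>E {..<m})"
    unfolding opt_def by (intro Min_in) (auto intro: finite_PiE)
  then show thesis using that by blast
qed

lemma opt_nonneg: "1 \<le> m \<Longrightarrow> \<forall>j<n. 0 \<le> p j \<Longrightarrow> 0 \<le> opt n m p sp"
  by (metis opt_attained makespan_nonneg)

lemma bag_makespan_le_makespan_comp:
  assumes "\<forall>k<m. \<sigma> k < m" "\<forall>j<n. \<beta> j < m"
  shows "bag_makespan n m p sp \<beta> \<le> makespan n m p sp (\<sigma> \<circ> \<beta>)"
proof -
  have "bag_makespan n m p sp \<beta> \<le> makespan n m p sp (restrict \<sigma> {..<m} \<circ> \<beta>)"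
    unfolding bag_makespan_def using assms(1) by (intro Min_le) (auto intro: finite_PiE)
  also have "\<dots> = makespan n m p sp (\<sigma> \<circ> \<beta>)"
    using assms(2) by (intro makespan_cong) auto
  finally show ?thesis .
qed

lemma bag_makespan_le_coll_makespan:
  "\<forall>j<n. \<beta> j < m \<Longrightarrow> \<forall>k<m. c k < m \<Longrightarrow> bag_makespan n m p sp \<beta> \<le> coll_makespan n m p sp (\<beta>, c)"
  unfolding coll_makespan_def by (simp add: bag_makespan_le_makespan_comp)

lemma bag_makespan_le_opt_if_singleton_bags:
  assumes "1 \<le> m" "\<forall>j<n. \<beta> j < m" "\<forall>k<m. card (bag n \<beta> k) \<le> 1"
  shows "bag_makespan n m p sp \<beta> \<le> opt n m p sp"
proof -
  obtain f where f: "f \<in> {..<n} \<rightarrow>\<^sub>E {..<m}" and opt: "opt n m p sp = makespan n m p sp f"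
    using opt_attained[OF assms(1)] .
  define \<sigma> where "\<sigma> k = (if bag n \<beta> k = {} then 0 else f (the_elem (bag n \<beta> k)))" for k
  have \<sigma>_\<beta>: "\<sigma> (\<beta> j) = f j" if "j < n" for j
  proof -
    have "j \<in> bag n \<beta> (\<beta> j)" "card (bag n \<beta> (\<beta> j)) \<le> 1"
      using that assms(2,3) by (auto simp: bag_def)
    then have "bag n \<beta> (\<beta> j) = {j}"
      by (auto simp: card_le_Suc0_iff_eq)
    then show ?thesis by (simp add: \<sigma>_def)
  qed
  have "\<sigma> k < m" if "k < m" for k
  proof (cases "bag n \<beta> k = {}")
    case False
    then obtain j where "j < n" "\<beta> j = k" by (auto simp: bag_def)
    then show ?thesis using f \<sigma>_\<beta> by auto
  qed (use assms(1) in \<open>simp add: \<sigma>_def\<close>)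
  then have "\<forall>k<m. \<sigma> k < m" by blast
  then have "bag_makespan n m p sp \<beta> \<le> makespan n m p sp (\<sigma> \<circ> \<beta>)"
    using assms(2) by (rule bag_makespan_le_makespan_comp)
  also have "\<dots> = opt n m p sp"
    using \<sigma>_\<beta> opt by (auto intro: makespan_cong)
  finally show ?thesis .
qed

section \<open>Unit jobs: bag sizes and collections\<close>

definition bag_size :: "nat \<Rightarrow> (nat \<Rightarrow> nat) \<Rightarrow> nat \<Rightarrow> nat" where
  "bag_size n \<beta> k = card (bag n \<beta> k)"

definition collection :: "nat \<Rightarrow> (nat \<Rightarrow> nat) \<Rightarrow> nat \<Rightarrow> nat set" where
  "collection m c i = {k. k < m \<and> c k = i}"

definition collection_size :: "nat \<Rightarrow> nat \<Rightarrow> (nat \<Rightarrow> nat) \<Rightarrow> (nat \<Rightarrow> nat) \<Rightarrow> nat \<Rightarrow> nat" where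
  "collection_size n m \<beta> c i = (\<Sum>k\<in>collection m c i. bag_size n \<beta> k)"

definition min_bag_size :: "nat \<Rightarrow> nat \<Rightarrow> (nat \<Rightarrow> nat) \<Rightarrow> nat" where
  "min_bag_size n m \<beta> = Min (bag_size n \<beta> ` {..<m})"

lemma finite_collection [simp]: "finite (collection m c i)"
  by (simp add: collection_def)

lemma psum_unit_bag: "psum (\<lambda>_. 1) (bag n \<beta> k) = real (bag_size n \<beta> k)"
  by (simp add: psum_def bag_size_def)

lemma bag_size_le: "bag_size n \<beta> k \<le> n"
  unfolding bag_size_def bag_def using card_mono[of "{..<n}" "{j. j < n \<and> \<beta> j = k}"] by auto

lemma card_eq_sum_card_fibers:
  assumes "finite J" "finite T" "g ` J \<subseteq> T"
  shows "card J = (\<Sum>k\<in>T. card {j\<in>J. g j = k})"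
  using sum.group[OF assms, of "\<lambda>_. 1::nat"] by simp

lemma card_comp_fiber_eq_collection_size:
  assumes "\<forall>j<n. \<beta> j < m"
  shows "card {j. j < n \<and> c (\<beta> j) = i} = collection_size n m \<beta> c i"
proof -
  let ?J = "{j. j < n \<and> c (\<beta> j) = i}"
  have "card ?J = (\<Sum>k\<in>collection m c i. card {j\<in>?J. \<beta> j = k})"
    using assms by (intro card_eq_sum_card_fibers) (auto simp: collection_def)
  also have "\<dots> = collection_size n m \<beta> c i"
    unfolding collection_size_def bag_size_def bag_def collection_def
    by (intro sum.cong) (auto intro: arg_cong[where f = card])
  finally show ?thesis .
qed

lemma load_unit_comp:
  "\<forall>j<n. \<beta> j < m \<Longrightarrow> load n (\<lambda>_. 1) (c \<circ> \<beta>) i = real (collection_size n m \<beta> c i)"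
  by (simp add: load_def card_comp_fiber_eq_collection_size)

lemma coll_makespan_unit_le_iff:
  assumes "1 \<le> m" "\<forall>j<n. \<beta> j < m" "\<forall>i<m. 0 \<le> sh i" "0 \<le> X"
  shows "coll_makespan n m (\<lambda>_. 1) sh (\<beta>, c) \<le> ereal X \<longleftrightarrow>
    (\<forall>i<m. real (collection_size n m \<beta> c i) \<le> X * sh i)"
  using assms by (simp add: coll_makespan_def makespan_le_iff load_unit_comp ptime_le_ereal_iff)

lemma sum_bag_size:
  assumes "\<forall>j<n. \<beta> j < m"
  shows "(\<Sum>k<m. bag_size n \<beta> k) = n"
proof -
  have "\<beta> ` {..<n} \<subseteq> {..<m}" using assms by auto
  from card_eq_sum_card_fibers[OF _ _ this] show ?thesis by (simp add: bag_size_def bag_def)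
qed

lemma min_bag_size_le: "k < m \<Longrightarrow> min_bag_size n m \<beta> \<le> bag_size n \<beta> k"
  unfolding min_bag_size_def by (rule Min_le) auto

lemma min_bag_size_ge_iff: "1 \<le> m \<Longrightarrow> x \<le> min_bag_size n m \<beta> \<longleftrightarrow> (\<forall>k<m. x \<le> bag_size n \<beta> k)"
  unfolding min_bag_size_def by (auto simp: lessThan_empty_iff)

lemma min_bag_size_le_n: "1 \<le> m \<Longrightarrow> min_bag_size n m \<beta> \<le> n"
  using order_trans[OF min_bag_size_le bag_size_le, of 0 m] by simp

section \<open>Placing bags of comparable sizes\<close>

lemma smallest_bag_fits_arith:
  fixes a b C P Q p m :: real
  assumes C: "2 \<le> C" and a: "0 \<le> a" "a \<le> b" "b \<le> C * a"
    and P: "p * b \<le> P" and Q: "(m - p - 1) * a \<le> Q" and p: "0 \<le> p" "p + 1 \<le> m"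
  shows "P + m * b \<le> C * (P + b + Q)"
proof -
  have "0 \<le> p * b" using p a by simp
  then have "P \<le> (C - 1) * P" using P C mult_right_mono[of 1 "C - 1" P] by simp
  then have "p * b \<le> (C - 1) * P" using P by linarith
  moreover have "(m - p - 1) * b \<le> C * Q"
  proof -
    have "(m - p - 1) * b \<le> (m - p - 1) * (C * a)" using p a by (intro mult_left_mono) auto
    also have "\<dots> = C * ((m - p - 1) * a)" by simp
    also have "\<dots> \<le> C * Q" using Q C by simp
    finally show ?thesis .
  qed
  moreover have "b \<le> C * b" using mult_right_mono[of 1 C b] C a by simp
  ultimately show ?thesis by (simp add: algebra_simps)
qed

lemma exists_machine_for_smallest_bag:
  fixes b x :: "nat \<Rightarrow> real" and a C :: real
  assumes C: "2 \<le> C" and b: "\<forall>k<m. a \<le> b k \<and> b k \<le> C * a"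
    and total: "(\<Sum>k<m. b k) = (\<Sum>i<m. x i)"
    and K: "insert k K \<subseteq> {..<m}" "k \<notin> K" and smallest: "\<forall>k'\<in>K. b k \<le> b k'"
    and \<sigma>: "\<forall>k'\<in>K. \<sigma> k' < m"
  shows "\<exists>i<m. (\<Sum>k' | k' \<in> K \<and> \<sigma> k' = i. b k') + b k \<le> C * x i"
proof (rule ccontr)
  \<comment> \<open>Otherwise summing over all machines contradicts the lower bound on the other bags.\<close>
  assume none: "\<not> ?thesis"
  have fin: "finite K" using K finite_subset[of K "{..<m}"] by simp
  have k: "k < m" using K by simp
  then have "(\<Sum>i<m. C * x i) < (\<Sum>i<m. (\<Sum>k' | k' \<in> K \<and> \<sigma> k' = i. b k') + b k)"
    using none by (intro sum_strict_mono) auto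
  also have "\<dots> = (\<Sum>k'\<in>K. b k') + m * b k"
    using sum.group[of K "{..<m}" \<sigma> b] \<sigma> fin by (auto simp: sum.distrib)
  finally have lt: "C * (\<Sum>i<m. x i) < (\<Sum>k'\<in>K. b k') + m * b k"
    by (simp add: sum_distrib_left)
  let ?Q = "\<Sum>k'\<in>{..<m} - insert k K. b k'"
  have k_in: "Suc (card K) \<le> m"
    using card_mono[OF _ K(1)] fin K(2) by simp
  have "a \<le> C * a" using b k by fastforce
  then have "0 \<le> (C - 1) * a" by (simp add: algebra_simps)
  then have a: "0 \<le> a" using C by (simp add: zero_le_mult_iff)
  have "(\<Sum>i<m. x i) = (\<Sum>k'\<in>K. b k') + b k + ?Q"
    using total K fin by (simp add: sum.subset_diff[of "insert k K" "{..<m}"])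
  moreover have "real (card K) * b k \<le> (\<Sum>k'\<in>K. b k')"
    using sum_mono[of K "\<lambda>_. b k" b] smallest by simp
  moreover have "(real m - real (card K) - 1) * a \<le> ?Q"
    using sum_mono[of "{..<m} - insert k K" "\<lambda>_. a" b] b K fin k_in
    by (simp add: card_Diff_subset of_nat_diff algebra_simps)
  ultimately have "(\<Sum>k'\<in>K. b k') + m * b k \<le> C * (\<Sum>i<m. x i)"
    using smallest_bag_fits_arith[OF C a] b k k_in by simp
  with lt show False by simp
qed

lemma exists_assignment_within_factor:
  fixes b x :: "nat \<Rightarrow> real" and a C :: real
  assumes C: "2 \<le> C" and b: "\<forall>k<m. a \<le> b k \<and> b k \<le> C * a" and x: "\<forall>i<m. 0 \<le> x i"
    and total: "(\<Sum>k<m. b k) = (\<Sum>i<m. x i)"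
  obtains \<sigma> where "\<forall>k<m. \<sigma> k < m" "\<forall>i<m. (\<Sum>k | k < m \<and> \<sigma> k = i. b k) \<le> C * x i"
proof -
  let ?load = "\<lambda>K \<sigma> i. \<Sum>k | k \<in> K \<and> \<sigma> k = i. b k"
  \<comment> \<open>Place the bags one by one, largest first, each on a machine where it fits.\<close>
  have "\<exists>\<sigma>. (\<forall>k\<in>K. \<sigma> k < m) \<and> (\<forall>i<m. ?load K \<sigma> i \<le> C * x i)" if "K \<subseteq> {..<m}" for K
    using finite_subset[OF that finite_lessThan] that
  proof (induction K rule: finite_ranking_induct[where f = "\<lambda>k. - b k"])
    case empty
    then show ?case using C x by auto
  next
    case (insert k K)
    show ?case
    proof (cases "k \<in> K")
      case True
      then show ?thesis using insert by (simp add: insert_absorb)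
    next
      case False
      obtain \<sigma> where \<sigma>: "\<forall>k\<in>K. \<sigma> k < m" "\<forall>i<m. ?load K \<sigma> i \<le> C * x i"
        using insert by auto
      obtain i where i: "i < m" "?load K \<sigma> i + b k \<le> C * x i"
        using exists_machine_for_smallest_bag[OF C b total insert.prems False _ \<sigma>(1)] insert.hyps(2)
        by auto
      have "?load (insert k K) (\<sigma>(k := i)) i' = ?load K \<sigma> i' + (if i' = i then b k else 0)" for i'
      proof -
        have "{k' \<in> insert k K. (\<sigma>(k := i)) k' = i'} =
            (if i' = i then insert k {k' \<in> K. \<sigma> k' = i'} else {k' \<in> K. \<sigma> k' = i'})"
          using False by auto
        then show ?thesis using insert.hyps(1) False by simp
      qed
      then show ?thesis using \<sigma> i insert.prems by (intro exI[of _ "\<sigma>(k := i)"]) auto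
    qed
  qed
  from this[of "{..<m}"] show thesis using that by auto
qed

lemma bag_makespan_le_if_bag_sizes_within_factor:
  fixes a C :: real
  assumes m: "1 \<le> m" and s: "\<forall>i<m. 0 < s i" and \<beta>: "\<forall>j<n. \<beta> j < m"
    and C: "2 \<le> C" and sizes: "\<forall>k<m. a \<le> bag_size n \<beta> k \<and> bag_size n \<beta> k \<le> C * a"
  shows "bag_makespan n m (\<lambda>_. 1) s \<beta> \<le> ereal C * opt n m (\<lambda>_. 1) s"
proof -
  obtain f where f: "f \<in> {..<n} \<rightarrow>\<^sub>E {..<m}" and opt: "opt n m (\<lambda>_. 1) s = makespan n m (\<lambda>_. 1) s f"
    using opt_attained[OF m] .
  define x where "x i = real (card {j. j < n \<and> f j = i})" for i
  have "f ` {..<n} \<subseteq> {..<m}" using f by auto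
  then have "card {..<n} = (\<Sum>i<m. card {j \<in> {..<n}. f j = i})"
    by (intro card_eq_sum_card_fibers) auto
  then have "(\<Sum>i<m. x i) = real n"
    by (simp add: x_def flip: of_nat_sum)
  also have "\<dots> = (\<Sum>k<m. real (bag_size n \<beta> k))"
    using sum_bag_size[OF \<beta>] by (simp flip: of_nat_sum)
  finally have "(\<Sum>k<m. real (bag_size n \<beta> k)) = (\<Sum>i<m. x i)" ..
  moreover have "\<forall>i<m. 0 \<le> x i" by (simp add: x_def)
  ultimately obtain \<sigma> where \<sigma>: "\<forall>k<m. \<sigma> k < m"
      "\<forall>i<m. (\<Sum>k | k < m \<and> \<sigma> k = i. real (bag_size n \<beta> k)) \<le> C * x i"
    using exists_assignment_within_factor[OF C sizes] by blast
  have "bag_makespan n m (\<lambda>_. 1) s \<beta> \<le> makespan n m (\<lambda>_. 1) s (\<sigma> \<circ> \<beta>)"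
    using \<sigma>(1) \<beta> by (rule bag_makespan_le_makespan_comp)
  also have "\<dots> \<le> ereal C * makespan n m (\<lambda>_. 1) s f"
    unfolding makespan_le_iff[OF m]
  proof (intro allI impI)
    fix i assume i: "i < m"
    have "ptime (load n (\<lambda>_. 1) (\<sigma> \<circ> \<beta>) i) (s i) \<le> ereal (C * x i / s i)"
    proof -
      have "real (collection_size n m \<beta> \<sigma> i) \<le> C * x i"
        using \<sigma>(2) i by (simp add: collection_size_def collection_def)
      moreover have "0 < s i" using s i by blast
      ultimately show ?thesis by (simp add: ptime_def load_unit_comp[OF \<beta>] divide_right_mono)
    qed
    also have "\<dots> = ereal C * ptime (load n (\<lambda>_. 1) f i) (s i)"
      using i s by (simp add: ptime_def load_def x_def)
    also have "\<dots> \<le> ereal C * makespan n m (\<lambda>_. 1) s f"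
      using C by (intro ereal_mult_left_mono ptime_le_makespan i) auto
    finally show "ptime (load n (\<lambda>_. 1) (\<sigma> \<circ> \<beta>) i) (s i) \<le> ereal C * makespan n m (\<lambda>_. 1) s f" .
  qed
  finally show ?thesis using opt by simp
qed

section \<open>One rebalancing step\<close>

lemma lpt_unit_balanced:
  assumes lpt: "lpt_assign (\<lambda>_. 1) L js a" and "k \<in> L" "k' \<in> L"
  shows "card {j \<in> set js. a j = k} \<le> card {j \<in> set js. a j = k'} + 1"
proof (cases "\<exists>t<length js. a (js ! t) = k")
  case False
  then have "{j \<in> set js. a j = k} = {}" by (auto simp: in_set_conv_nth)
  then show ?thesis by (metis card.empty le0 trans_le_add1)
next
  case True
  \<comment> \<open>Look at the moment the last job of bag k was assigned: k was least loaded then.\<close>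
  define t where "t = Max {t. t < length js \<and> a (js ! t) = k}"
  have t: "t < length js" "a (js ! t) = k"
    using Max_in[of "{t. t < length js \<and> a (js ! t) = k}"] True by (auto simp: t_def)
  have t_last: "u \<le> t" if "u < length js" "a (js ! u) = k" for u
    using that by (auto simp: t_def)
  have "distinct js" using lpt by (simp add: lpt_assign_def)
  then have "js ! t \<notin> set (take t js)"
    by (subst (asm) id_take_nth_drop[OF t(1)]) auto
  moreover have "{j \<in> set js. a j = k} = insert (js ! t) {j \<in> set (take t js). a j = k}"
  proof (intro equalityI subsetI)
    fix j assume "j \<in> {j \<in> set js. a j = k}"
    then obtain u where u: "u < length js" "js ! u = j" "a j = k" by (auto simp: in_set_conv_nth)
    with t_last[of u] have "u = t \<or> u < t" by auto
    then show "j \<in> insert (js ! t) {j \<in> set (take t js). a j = k}"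
      using u by (auto simp: in_set_conv_nth)
  qed (use t in \<open>auto dest: in_set_takeD\<close>)
  moreover have "card {j \<in> set (take t js). a j = k} \<le> card {j \<in> set (take t js). a j = k'}"
    using lpt t \<open>k' \<in> L\<close> unfolding lpt_assign_def by auto
  moreover have "card {j \<in> set (take t js). a j = k'} \<le> card {j \<in> set js. a j = k'}"
    by (intro card_mono) (auto dest: in_set_takeD)
  ultimately show ?thesis by simp
qed

lemma loop_cond_unit_iff:
  assumes "1 \<le> m"
  shows "loop_cond n m (\<lambda>_. 1) \<rho> \<beta> \<longleftrightarrow>
    (\<exists>k<m. 2 \<le> bag_size n \<beta> k \<and> \<rho> * min_bag_size n m \<beta> < bag_size n \<beta> k)"
proof -
  let ?K2 = "{k. k < m \<and> 2 \<le> bag_size n \<beta> k}"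
  have "Min ((\<lambda>k. real (bag_size n \<beta> k)) ` {..<m}) = real (min_bag_size n m \<beta>)"
    unfolding min_bag_size_def using assms
    by (subst mono_Min_commute[where f = real]) (auto simp: mono_def image_image lessThan_empty_iff)
  moreover have "x < Max ((\<lambda>k. real (bag_size n \<beta> k)) ` ?K2) \<longleftrightarrow> (\<exists>k\<in>?K2. x < bag_size n \<beta> k)"
    if "?K2 \<noteq> {}" for x
    using that by (subst Max_gr_iff) auto
  ultimately show ?thesis
    unfolding loop_cond_def Let_def psum_unit_bag bag_size_def[symmetric] by auto
qed

definition balanced_state :: "nat \<Rightarrow> nat \<Rightarrow> (nat \<Rightarrow> nat) \<Rightarrow> (nat \<Rightarrow> nat) \<Rightarrow> bool" where
  "balanced_state n m \<beta> c \<longleftrightarrow> (\<forall>j<n. \<beta> j < m) \<and> (\<forall>k<m. c k < m) \<and>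
     (\<forall>k<m. \<forall>k'<m. c k = c k' \<longrightarrow> bag_size n \<beta> k \<le> bag_size n \<beta> k' + 1)"

lemma collection_size_lower:
  assumes "balanced_state n m \<beta> c" "k < m" "1 \<le> bag_size n \<beta> k"
  shows "card (collection m c (c k)) * (bag_size n \<beta> k - 1) + 1 \<le> collection_size n m \<beta> c (c k)"
proof -
  let ?C = "collection m c (c k)"
  have k: "k \<in> ?C" using assms(2) by (simp add: collection_def)
  have "(\<Sum>k'\<in>?C - {k}. bag_size n \<beta> k - 1) \<le> (\<Sum>k'\<in>?C - {k}. bag_size n \<beta> k')"
    using assms(1,2) by (intro sum_mono) (force simp: balanced_state_def collection_def)
  then have "bag_size n \<beta> k + (card ?C - 1) * (bag_size n \<beta> k - 1) \<le> collection_size n m \<beta> c (c k)"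
    using k by (simp add: collection_size_def sum.remove)
  moreover obtain b where "bag_size n \<beta> k = Suc b" using assms(3) by (cases "bag_size n \<beta> k") auto
  moreover obtain l where "card ?C = Suc l" using k by (cases "card ?C") auto
  ultimately show ?thesis by simp
qed

lemma rejected_step_arith:
  fixes \<alpha> a b l L Y :: real
  assumes \<alpha>: "0 < \<alpha>" and l: "1 \<le> l" and a: "0 \<le> a"
    and rejected: "(1 + \<alpha>) * Y < L + a" and bound: "L \<le> Y + (l - 1) * a"
    and lower: "l * (b - 1) + 1 \<le> L"
  shows "\<alpha> * (b - 1) < (1 + \<alpha>) * a"
proof -
  have "(1 + \<alpha>) * (L - (l - 1) * a) \<le> (1 + \<alpha>) * Y"
    using bound \<alpha> by (intro mult_left_mono) auto
  with rejected have "\<alpha> * L < (1 + \<alpha>) * l * a - \<alpha> * a"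
    by (simp add: algebra_simps)
  moreover have "\<alpha> * (l * (b - 1) + 1) \<le> \<alpha> * L"
    using lower \<alpha> by (intro mult_left_mono) auto
  moreover have "0 \<le> \<alpha> * a" using \<alpha> a by simp
  ultimately have "l * (\<alpha> * (b - 1)) < l * ((1 + \<alpha>) * a)"
    using \<alpha> by (simp add: algebra_simps)
  then show ?thesis using l by simp
qed

text \<open>The paper's bound \<open>p(M\<^sub>i) \<le> OPT\<^sub>C \<cdot> sh i + (|M\<^sub>i| - 1) \<cdot> min\<^sub>B p(B)\<close>, with \<open>X\<close> for \<open>OPT\<^sub>C\<close>.\<close>

definition collection_load_bound ::
    "nat \<Rightarrow> nat \<Rightarrow> (nat \<Rightarrow> real) \<Rightarrow> real \<Rightarrow> (nat \<Rightarrow> nat) \<Rightarrow> (nat \<Rightarrow> nat) \<Rightarrow> bool" where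
  "collection_load_bound n m sh X \<beta> c \<longleftrightarrow> (\<forall>i<m. collection m c i \<noteq> {} \<longrightarrow>
     real (collection_size n m \<beta> c i)
       \<le> X * sh i + (real (card (collection m c i)) - 1) * real (min_bag_size n m \<beta>))"

text \<open>Decreases lexicographically in the pair (\<open>n -\<close> minimum bag size, number of minimum bags).\<close>

definition rebalance_measure :: "nat \<Rightarrow> nat \<Rightarrow> (nat \<Rightarrow> nat) \<Rightarrow> nat" where
  "rebalance_measure n m \<beta> =
     (n - min_bag_size n m \<beta>) * (m + 1) + card {k. k < m \<and> bag_size n \<beta> k = min_bag_size n m \<beta>}"

text \<open>\<open>kmin\<close>, \<open>kmax\<close> and \<open>js\<close> are the witnesses of \<open>lpt_rebalance_def\<close>.\<close>

locale unit_rebalance =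
  fixes n m :: nat and \<beta> c \<beta>' c' :: "nat \<Rightarrow> nat" and kmin kmax :: nat and js :: "nat list"
  assumes balanced: "balanced_state n m \<beta> c"
    and loop: "loop_cond n m (\<lambda>_. 1) 2 \<beta>"
    and kmin: "kmin < m"
    and kmin_least: "\<forall>k<m. psum (\<lambda>_. 1) (bag n \<beta> kmin) \<le> psum (\<lambda>_. 1) (bag n \<beta> k)"
    and kmax: "kmax < m"
    and kmax_two: "2 \<le> card (bag n \<beta> kmax)"
    and kmax_greatest:
      "\<forall>k<m. 2 \<le> card (bag n \<beta> k) \<longrightarrow> psum (\<lambda>_. 1) (bag n \<beta> k) \<le> psum (\<lambda>_. 1) (bag n \<beta> kmax)"
    and c': "c' = c(kmin := c kmax)"
    and js: "set js = {j. j < n \<and> \<beta> j \<in> {k. k < m \<and> c' k = c kmax}}"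
    and lpt: "lpt_assign (\<lambda>_. 1) {k. k < m \<and> c' k = c kmax} js \<beta>'"
    and outside: "\<forall>j. j < n \<and> j \<notin> set js \<longrightarrow> \<beta>' j = \<beta> j"

lemma lpt_rebalance_unit_rebalance:
  assumes "balanced_state n m \<beta> c" "loop_cond n m (\<lambda>_. 1) 2 \<beta>"
    and "lpt_rebalance n m (\<lambda>_. 1) (\<beta>, c) (\<beta>', c')"
  obtains kmin kmax js where "unit_rebalance n m \<beta> c \<beta>' c' kmin kmax js"
  using assms unfolding lpt_rebalance_def Let_def unit_rebalance_def by auto

context unit_rebalance
begin

lemma one_le_m: "1 \<le> m"
  using kmin by simp

lemma kmin_size: "bag_size n \<beta> kmin = min_bag_size n m \<beta>"
  using kmin_least min_bag_size_le[OF kmin] min_bag_size_ge_iff[OF one_le_m]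
  by (simp add: psum_unit_bag le_antisym)

lemma kmax_size_greatest: "k < m \<Longrightarrow> 2 \<le> bag_size n \<beta> k \<Longrightarrow> bag_size n \<beta> k \<le> bag_size n \<beta> kmax"
  using kmax_greatest by (simp add: psum_unit_bag bag_size_def)

lemma kmax_size: "2 \<le> bag_size n \<beta> kmax" "2 * min_bag_size n m \<beta> < bag_size n \<beta> kmax"
proof -
  show "2 \<le> bag_size n \<beta> kmax" using kmax_two by (simp add: bag_size_def)
  obtain k where "k < m" "2 \<le> bag_size n \<beta> k" "2 * min_bag_size n m \<beta> < bag_size n \<beta> k"
    using loop unfolding loop_cond_unit_iff[OF one_le_m] by auto
  then show "2 * min_bag_size n m \<beta> < bag_size n \<beta> kmax"
    using kmax_size_greatest by fastforce
qed

lemma collections_distinct: "c kmin \<noteq> c kmax"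
proof
  assume "c kmin = c kmax"
  then have "bag_size n \<beta> kmax \<le> bag_size n \<beta> kmin + 1"
    using balanced kmin kmax by (simp add: balanced_state_def)
  then show False using kmax_size kmin_size by simp
qed

abbreviation target :: "nat set" where
  "target \<equiv> collection m c' (c kmax)"

lemma target_eq: "target = insert kmin (collection m c (c kmax))"
  using kmin by (auto simp: c' collection_def)

lemma kmin_notin_source: "kmin \<notin> collection m c (c kmax)"
  using collections_distinct by (simp add: collection_def)

lemma other_collection_eq: "i \<noteq> c kmax \<Longrightarrow> collection m c' i = collection m c i - {kmin}"
  by (auto simp: c' collection_def)

lemma lpt_target: "lpt_assign (\<lambda>_. 1) target js \<beta>'"
  using lpt by (simp add: collection_def)

lemma js_eq: "set js = {j. j < n \<and> \<beta> j \<in> target}"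
  using js by (simp add: collection_def)

lemma relabelled_into_target: "j \<in> set js \<Longrightarrow> \<beta>' j \<in> target"
  using lpt_target by (auto simp: lpt_assign_def in_set_conv_nth)

lemma new_labels_range: "\<forall>j<n. \<beta>' j < m"
  using relabelled_into_target outside balanced
  by (fastforce simp: balanced_state_def collection_def)

lemma bag_target: "k \<in> target \<Longrightarrow> bag n \<beta>' k = {j \<in> set js. \<beta>' j = k}"
  using outside js_eq by (auto simp: bag_def)

lemma bag_outside_target: "k \<notin> target \<Longrightarrow> bag n \<beta>' k = bag n \<beta> k"
  using outside js_eq relabelled_into_target by (auto simp: bag_def)

lemma sum_bag_size_target: "(\<Sum>k\<in>target. bag_size n \<beta>' k) = (\<Sum>k\<in>target. bag_size n \<beta> k)"
proof -
  have "(\<Sum>k\<in>target. bag_size n \<beta>' k) = (\<Sum>k\<in>target. card {j \<in> set js. \<beta>' j = k})"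
    by (simp add: bag_size_def bag_target)
  also have "\<dots> = card (set js)"
    using relabelled_into_target by (intro card_eq_sum_card_fibers[symmetric]) auto
  also have "\<dots> = (\<Sum>k\<in>target. card {j \<in> set js. \<beta> j = k})"
    using js_eq by (intro card_eq_sum_card_fibers) auto
  also have "\<dots> = (\<Sum>k\<in>target. bag_size n \<beta> k)"
    unfolding bag_size_def bag_def js_eq by (intro sum.cong) (auto intro: arg_cong[where f = card])
  finally show ?thesis .
qed

lemma target_balanced: "k \<in> target \<Longrightarrow> k' \<in> target \<Longrightarrow> bag_size n \<beta>' k \<le> bag_size n \<beta>' k' + 1"
  using lpt_unit_balanced[OF lpt_target] by (simp add: bag_size_def bag_target)

lemma target_grows: 
  assumes "k \<in> target"
  shows "min_bag_size n m \<beta> + 1 \<le> bag_size n \<beta>' k"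
proof (rule ccontr)
  let ?a = "min_bag_size n m \<beta>" and ?C = "collection m c (c kmax)"
  assume "\<not> ?thesis"
  then have small: "bag_size n \<beta>' k \<le> ?a" by simp
  have "(\<Sum>k'\<in>target. bag_size n \<beta>' k') = bag_size n \<beta>' k + (\<Sum>k'\<in>target - {k}. bag_size n \<beta>' k')"
    using assms by (simp add: sum.remove)
  also have "\<dots> \<le> ?a + card ?C * (?a + 1)"
    using sum_bounded_above[of "target - {k}" "bag_size n \<beta>'" "?a + 1"]
      target_balanced[OF _ assms] small assms kmin_notin_source
    by (fastforce simp: target_eq)
  also have "\<dots> < ?a + (card ?C * (bag_size n \<beta> kmax - 1) + 1)"
  proof -
    have "?a + 1 \<le> bag_size n \<beta> kmax - 1" using kmax_size by linarith
    then have "card ?C * (?a + 1) \<le> card ?C * (bag_size n \<beta> kmax - 1)" by (rule mult_le_mono2)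
    then show ?thesis by linarith
  qed
  also have "\<dots> \<le> ?a + collection_size n m \<beta> c (c kmax)"
    using collection_size_lower[OF balanced kmax] kmax_size by simp
  also have "\<dots> = (\<Sum>k'\<in>target. bag_size n \<beta> k')"
    using kmin_notin_source kmin_size by (simp add: target_eq collection_size_def)
  finally show False using sum_bag_size_target by simp
qed

lemma bag_size_outside_target: "k \<notin> target \<Longrightarrow> bag_size n \<beta>' k = bag_size n \<beta> k"
  by (simp add: bag_size_def bag_outside_target)

lemma balanced_state_after: "balanced_state n m \<beta>' c'"
proof -
  have "bag_size n \<beta>' k \<le> bag_size n \<beta>' k' + 1" if "k < m" "k' < m" "c' k = c' k'" for k k'
  proof (cases "k \<in> target")
    case True
    then show ?thesis using that target_balanced by (simp add: collection_def)
  next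
    case False
    then have "k' \<notin> target" "c k = c k'" "k \<noteq> kmin" "k' \<noteq> kmin"
      using that kmin by (auto simp: collection_def c' split: if_splits)
    then show ?thesis
      using that False balanced bag_size_outside_target by (simp add: balanced_state_def)
  qed
  moreover have "\<forall>k<m. c' k < m" using balanced kmax by (simp add: balanced_state_def c')
  ultimately show ?thesis using new_labels_range by (simp add: balanced_state_def)
qed

lemma bag_size_after_ge: "k < m \<Longrightarrow> min_bag_size n m \<beta> \<le> bag_size n \<beta>' k"
  using target_grows min_bag_size_le bag_size_outside_target by (metis Suc_eq_plus1 Suc_leD)

lemma min_bag_size_mono: "min_bag_size n m \<beta> \<le> min_bag_size n m \<beta>'"
  using bag_size_after_ge min_bag_size_ge_iff[OF one_le_m] by blast

lemma min_bags_shrink: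
  assumes "min_bag_size n m \<beta>' = min_bag_size n m \<beta>"
  shows "card {k. k < m \<and> bag_size n \<beta>' k = min_bag_size n m \<beta>'}
    < card {k. k < m \<and> bag_size n \<beta> k = min_bag_size n m \<beta>}"
proof (rule psubset_card_mono)
  let ?a = "min_bag_size n m \<beta>"
  have "{k. k < m \<and> bag_size n \<beta>' k = ?a} \<subseteq> {k. k < m \<and> bag_size n \<beta> k = ?a} - {kmin}"
  proof
    fix k assume k: "k \<in> {k. k < m \<and> bag_size n \<beta>' k = ?a}"
    then have "k \<notin> target" using target_grows by fastforce
    then show "k \<in> {k. k < m \<and> bag_size n \<beta> k = ?a} - {kmin}"
      using k bag_size_outside_target[of k] by (auto simp: target_eq)
  qed
  moreover have "kmin \<in> {k. k < m \<and> bag_size n \<beta> k = ?a}"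
    using kmin kmin_size by simp
  ultimately show "{k. k < m \<and> bag_size n \<beta>' k = min_bag_size n m \<beta>'}
    \<subset> {k. k < m \<and> bag_size n \<beta> k = ?a}"
    unfolding assms by blast
qed (rule finite_subset[of _ "{..<m}"], auto)

lemma collection_size_target:
  "collection_size n m \<beta>' c' (c kmax) = collection_size n m \<beta> c (c kmax) + min_bag_size n m \<beta>"
  using sum_bag_size_target kmin_notin_source kmin_size
  by (simp add: collection_size_def target_eq)

lemma card_target: "card (collection m c' (c kmax)) = card (collection m c (c kmax)) + 1"
  using kmin_notin_source by (simp add: target_eq)

lemma collection_size_other:
  assumes "i \<noteq> c kmax"
  shows "collection_size n m \<beta>' c' i = (\<Sum>k\<in>collection m c i - {kmin}. bag_size n \<beta> k)"
proof -
  have "k \<notin> target" if "k \<in> collection m c' i" for k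
    using that assms by (simp add: collection_def)
  then show ?thesis
    unfolding collection_size_def using assms bag_size_outside_target
    by (intro sum.cong) (simp_all add: other_collection_eq)
qed

lemma rebalance_measure_decreases:
  "rebalance_measure n m \<beta>' < rebalance_measure n m \<beta>"
proof (cases "min_bag_size n m \<beta>' = min_bag_size n m \<beta>")
  case True
  then show ?thesis using min_bags_shrink by (simp add: rebalance_measure_def)
next
  case False
  then have "n - min_bag_size n m \<beta>' + 1 \<le> n - min_bag_size n m \<beta>"
    using min_bag_size_mono min_bag_size_le_n[OF one_le_m, of n \<beta>'] by linarith
  then have "(n - min_bag_size n m \<beta>' + 1) * (m + 1) \<le> (n - min_bag_size n m \<beta>) * (m + 1)"
    by (rule mult_right_mono) simp
  moreover have "card {k. k < m \<and> bag_size n \<beta>' k = min_bag_size n m \<beta>'} \<le> m"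
    using card_mono[of "{..<m}" "{k. k < m \<and> bag_size n \<beta>' k = min_bag_size n m \<beta>'}"] by auto
  ultimately show ?thesis by (simp add: rebalance_measure_def)
qed

lemma collection_load_bound_after:
  assumes bound: "collection_load_bound n m sh X \<beta> c"
  shows "collection_load_bound n m sh X \<beta>' c'"
  unfolding collection_load_bound_def
proof (intro allI impI)
  fix i assume i: "i < m" and ne: "collection m c' i \<noteq> {}"
  let ?a = "real (min_bag_size n m \<beta>)" and ?a' = "real (min_bag_size n m \<beta>')"
  let ?l = "real (card (collection m c i))" and ?l' = "real (card (collection m c' i))"
  have "1 \<le> ?l'" using ne by (simp add: Suc_le_eq card_gt_0_iff)
  then have mono: "(?l' - 1) * ?a \<le> (?l' - 1) * ?a'"
    using min_bag_size_mono by (intro mult_left_mono) auto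
  have "real (collection_size n m \<beta>' c' i) \<le> X * sh i + (?l' - 1) * ?a"
  proof (cases "i = c kmax")
    case True
    then have "collection m c i \<noteq> {}" using kmax by (auto simp: collection_def)
    then show ?thesis
      using bound i True collection_size_target card_target
      by (auto simp: collection_load_bound_def algebra_simps)
  next
    case False
    \<comment> \<open>Removing the minimum bag from collection i lowers its size by exactly the
        minimum bag size, which pays for the term it loses in the bound.\<close>
    have "collection m c i \<noteq> {}" using ne other_collection_eq[OF False] by auto
    then have old: "real (collection_size n m \<beta> c i) \<le> X * sh i + (?l - 1) * ?a"
      using bound i by (simp add: collection_load_bound_def)
    define \<delta> :: real where "\<delta> = (if kmin \<in> collection m c i then 1 else 0)"
    have "real (collection_size n m \<beta>' c' i) + \<delta> * ?a = real (collection_size n m \<beta> c i)"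
      using collection_size_other[OF False] kmin_size
      by (simp add: \<delta>_def collection_size_def sum.remove flip: of_nat_sum)
    moreover have "?l = ?l' + \<delta>"
    proof (cases "kmin \<in> collection m c i")
      case True
      then show ?thesis
        using other_collection_eq[OF False] card_Suc_Diff1[of "collection m c i" kmin]
        by (simp add: \<delta>_def)
    qed (simp add: other_collection_eq[OF False] \<delta>_def)
    then have "(?l - 1) * ?a = (?l' - 1) * ?a + \<delta> * ?a" by (simp add: algebra_simps)
    ultimately show ?thesis using old by linarith
  qed
  with mono show "real (collection_size n m \<beta>' c' i) \<le> X * sh i + (?l' - 1) * ?a'"
    by linarith
qed

lemma collection_size_other_le:
  "i \<noteq> c kmax \<Longrightarrow> collection_size n m \<beta>' c' i \<le> collection_size n m \<beta> c i"
  unfolding collection_size_other by (auto simp: collection_size_def intro: sum_mono2)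

lemma rejected_step_bounds:
  assumes \<alpha>: "0 < \<alpha>" and sh: "\<forall>i<m. 0 \<le> sh i" and X: "0 \<le> X"
    and before: "coll_makespan n m (\<lambda>_. 1) sh (\<beta>, c) \<le> ereal ((1 + \<alpha>) * X)"
    and bound: "collection_load_bound n m sh X \<beta> c"
    and after: "\<not> coll_makespan n m (\<lambda>_. 1) sh (\<beta>', c') \<le> ereal ((1 + \<alpha>) * X)"
  shows "1 \<le> min_bag_size n m \<beta>"
    and "\<alpha> * (real (bag_size n \<beta> kmax) - 1) < (1 + \<alpha>) * min_bag_size n m \<beta>"
proof -
  let ?a = "real (min_bag_size n m \<beta>)" and ?i = "c kmax"
  let ?l = "real (card (collection m c ?i))" and ?L = "real (collection_size n m \<beta> c ?i)"
  have "0 \<le> (1 + \<alpha>) * X" using X \<alpha> by simp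
  note coll_le = coll_makespan_unit_le_iff[OF one_le_m _ sh this]
  have i: "?i < m" and "\<forall>j<n. \<beta> j < m" using balanced kmax by (simp_all add: balanced_state_def)
  then have old: "\<forall>i<m. real (collection_size n m \<beta> c i) \<le> (1 + \<alpha>) * X * sh i"
    using before coll_le[where n = n] by (simp add: mult.assoc)
  \<comment> \<open>Only the machine receiving the minimum bag gained load, so it is the one over the limit.\<close>
  obtain i' where "i' < m" "(1 + \<alpha>) * X * sh i' < real (collection_size n m \<beta>' c' i')"
    using after new_labels_range coll_le[where n = n] by (auto simp: not_le mult.assoc)
  moreover from this old have "i' = ?i"
    using collection_size_other_le[of i'] by (meson of_nat_le_iff order_trans not_le)
  ultimately have over: "(1 + \<alpha>) * (X * sh ?i) < ?L + ?a"
    using collection_size_target by (simp add: mult.assoc)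
  moreover have "?L \<le> (1 + \<alpha>) * (X * sh ?i)"
    using old i by (simp add: mult.assoc)
  ultimately show a: "1 \<le> min_bag_size n m \<beta>" by simp
  have "collection m c ?i \<noteq> {}" using kmax by (auto simp: collection_def)
  then have potential: "?L \<le> X * sh ?i + (?l - 1) * ?a" and l: "1 \<le> ?l"
    using bound i by (auto simp: collection_load_bound_def Suc_le_eq card_gt_0_iff)
  have lower: "?l * (real (bag_size n \<beta> kmax) - 1) + 1 \<le> ?L"
  proof -
    have "card (collection m c ?i) * (bag_size n \<beta> kmax - 1) + 1 \<le> collection_size n m \<beta> c ?i"
      using collection_size_lower[OF balanced kmax] kmax_size by simp
    then have "real (card (collection m c ?i) * (bag_size n \<beta> kmax - 1) + 1) \<le> ?L"
      by (simp only: of_nat_le_iff)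
    then show ?thesis using kmax_size by (simp add: of_nat_diff)
  qed
  show "\<alpha> * (real (bag_size n \<beta> kmax) - 1) < (1 + \<alpha>) * ?a"
    using rejected_step_arith[OF \<alpha> l _ over potential lower] by simp
qed

end

section \<open>The loop of IPR\<close>

lemma ipr_step_unit_rebalance:
  assumes "balanced_state n m \<beta> c" "ipr_step n m (\<lambda>_. 1) sh \<alpha> 2 OPTC (\<beta>, c) (\<beta>', c')"
  obtains kmin kmax js where "unit_rebalance n m \<beta> c \<beta>' c' kmin kmax js"
  using assms by (auto simp: ipr_step_def elim: lpt_rebalance_unit_rebalance)

lemma ipr_step_terminates:
  assumes "balanced_state n m (fst st) (snd st)"
  shows "\<nexists>f. f 0 = st \<and> (\<forall>k. ipr_step n m (\<lambda>_. 1) sh \<alpha> 2 OPTC (f k) (f (Suc k)))"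
proof
  assume "\<exists>f. f 0 = st \<and> (\<forall>k. ipr_step n m (\<lambda>_. 1) sh \<alpha> 2 OPTC (f k) (f (Suc k)))"
  then obtain f where f0: "f 0 = st"
    and steps: "\<And>k. ipr_step n m (\<lambda>_. 1) sh \<alpha> 2 OPTC (f k) (f (Suc k))"
    by blast
  have "balanced_state n m (fst (f k)) (snd (f k)) \<and>
    rebalance_measure n m (fst (f k)) + k \<le> rebalance_measure n m (fst st)" for k
  proof (induction k)
    case 0
    then show ?case using assms f0 by simp
  next
    case (Suc k)
    obtain \<beta> c \<beta>' c' where st: "f k = (\<beta>, c)" "f (Suc k) = (\<beta>', c')" by fastforce
    then obtain kmin kmax js where "unit_rebalance n m \<beta> c \<beta>' c' kmin kmax js"
      using Suc.IH steps[of k] by (auto elim: ipr_step_unit_rebalance)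
    then interpret unit_rebalance n m \<beta> c \<beta>' c' kmin kmax js .
    show ?case using Suc.IH st balanced_state_after rebalance_measure_decreases by simp
  qed
  from this[of "Suc (rebalance_measure n m (fst st))"] show False by simp
qed

lemma ipr_run_invariant:
  assumes "ipr_run n m p sh \<alpha> \<rho> OPTC st out" "I st"
    and step: "\<And>st st'. I st \<Longrightarrow> ipr_step n m p sh \<alpha> \<rho> OPTC st st' \<Longrightarrow> I st'"
  shows "\<exists>c. I (out, c) \<and> (\<not> loop_cond n m p \<rho> out \<or> loop_cond n m p \<rho> out \<and>
    (\<exists>st'. lpt_rebalance n m p (out, c) st' \<and> ereal (1 + \<alpha>) * OPTC < coll_makespan n m p sh st'))"
  using assms(1,2)
proof (induction rule: ipr_run.induct)
  case (stop st)
  then show ?case by (intro exI[of _ "snd st"]) simp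
next
  case (reject st st')
  then show ?case by (intro exI[of _ "snd st"]) (auto simp del: split_paired_Ex)
next
  case (cont st st' out)
  then show ?case using step by blast
qed

text \<open>
  The potential bound is only needed for finite \<open>OPTC\<close>: \<open>OPTC = \<infinity>\<close> (a loaded machine of
  predicted speed 0) never rejects a step.
\<close>

fun ipr_invariant ::
    "nat \<Rightarrow> nat \<Rightarrow> (nat \<Rightarrow> real) \<Rightarrow> real \<Rightarrow> ereal \<Rightarrow> (nat \<Rightarrow> nat) \<times> (nat \<Rightarrow> nat) \<Rightarrow> bool" where
  "ipr_invariant n m sh \<alpha> OPTC (\<beta>, c) \<longleftrightarrow>
     balanced_state n m \<beta> c \<and> coll_makespan n m (\<lambda>_. 1) sh (\<beta>, c) \<le> ereal (1 + \<alpha>) * OPTC \<and>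
     (\<forall>X. OPTC = ereal X \<longrightarrow> collection_load_bound n m sh X \<beta> c)"

lemma ipr_invariant_step:
  assumes "ipr_invariant n m sh \<alpha> OPTC st" "ipr_step n m (\<lambda>_. 1) sh \<alpha> 2 OPTC st st'"
  shows "ipr_invariant n m sh \<alpha> OPTC st'"
proof -
  obtain \<beta> c \<beta>' c' where st: "st = (\<beta>, c)" "st' = (\<beta>', c')" by fastforce
  then obtain kmin kmax js where "unit_rebalance n m \<beta> c \<beta>' c' kmin kmax js"
    using assms by (auto elim: ipr_step_unit_rebalance)
  then interpret unit_rebalance n m \<beta> c \<beta>' c' kmin kmax js .
  show ?thesis
    using assms st balanced_state_after collection_load_bound_after
    by (auto simp: ipr_step_def not_less)
qed

lemma ipr_invariant_init:
  assumes m: "1 \<le> m" and \<alpha>: "0 \<le> \<alpha>" and sh: "\<forall>i<m. 0 \<le> sh i"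
    and init: "ipr_init n m (\<lambda>_. 1) sh \<epsilon> \<beta>0"
  shows "ipr_invariant n m sh \<alpha> (makespan n m (\<lambda>_. 1) sh \<beta>0) (\<beta>0, id)"
proof -
  let ?O = "makespan n m (\<lambda>_. 1) sh \<beta>0"
  have \<beta>0: "\<forall>j<n. \<beta>0 j < m" using init by (simp add: ipr_init_def)
  have O: "0 \<le> ?O" using makespan_nonneg[OF m] by simp
  have singleton: "collection m id i = {i}" if "i < m" for i
    using that by (auto simp: collection_def)
  have "balanced_state n m \<beta>0 id"
    using \<beta>0 by (simp add: balanced_state_def)
  moreover have "coll_makespan n m (\<lambda>_. 1) sh (\<beta>0, id) \<le> ereal (1 + \<alpha>) * ?O"
    using O \<alpha> by (cases ?O) (auto simp: coll_makespan_def ring_distribs)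
  moreover have "collection_load_bound n m sh X \<beta>0 id" if X: "?O = ereal X" for X
  proof -
    have "coll_makespan n m (\<lambda>_. 1) sh (\<beta>0, id) \<le> ereal X"
      using X by (simp add: coll_makespan_def)
    then show ?thesis
      using X O m \<beta>0 sh
      by (auto simp: collection_load_bound_def coll_makespan_unit_le_iff singleton
          collection_size_def)
  qed
  ultimately show ?thesis by simp
qed

lemma rejected_step_bag_sizes:
  assumes \<alpha>: "0 < \<alpha>" and sh: "\<forall>i<m. 0 \<le> sh i" and OPTC: "0 \<le> OPTC"
    and inv: "ipr_invariant n m sh \<alpha> OPTC (\<beta>, c)"
    and loop: "loop_cond n m (\<lambda>_. 1) 2 \<beta>" and rb: "lpt_rebalance n m (\<lambda>_. 1) (\<beta>, c) (\<beta>', c')"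
    and rejected: "ereal (1 + \<alpha>) * OPTC < coll_makespan n m (\<lambda>_. 1) sh (\<beta>', c')"
  shows "\<forall>k<m. real (bag_size n \<beta> k) \<le> (2 + 1 / \<alpha>) * min_bag_size n m \<beta>"
proof -
  have "balanced_state n m \<beta> c" using inv by simp
  then obtain kmin kmax js where "unit_rebalance n m \<beta> c \<beta>' c' kmin kmax js"
    using loop rb by (rule lpt_rebalance_unit_rebalance)
  then interpret unit_rebalance n m \<beta> c \<beta>' c' kmin kmax js .
  obtain X where X: "OPTC = ereal X" "0 \<le> X"
    using OPTC rejected \<alpha> by (cases OPTC) auto
  let ?a = "real (min_bag_size n m \<beta>)" and ?b = "real (bag_size n \<beta> kmax)"
  have a: "1 \<le> ?a" and "\<alpha> * (?b - 1) < (1 + \<alpha>) * ?a"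
    using rejected_step_bounds[OF \<alpha> sh X(2)] inv rejected X by (simp_all add: not_le)
  moreover have "\<alpha> \<le> \<alpha> * ?a" using mult_left_mono[of 1 ?a \<alpha>] \<alpha> a by simp
  moreover have "\<alpha> * ((2 + 1 / \<alpha>) * ?a) = ?a + 2 * (\<alpha> * ?a)" using \<alpha> by (simp add: field_simps)
  ultimately have "\<alpha> * ?b \<le> \<alpha> * ((2 + 1 / \<alpha>) * ?a)"
    by (simp add: algebra_simps)
  then have b: "?b \<le> (2 + 1 / \<alpha>) * ?a" using \<alpha> by simp
  show ?thesis
  proof (intro allI impI)
    fix k assume "k < m"
    then have "real (bag_size n \<beta> k) \<le> max 1 ?b"
      using kmax_size_greatest[of k] by (cases "2 \<le> bag_size n \<beta> k") auto
    also have "\<dots> \<le> (2 + 1 / \<alpha>) * ?a"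
      using b a \<alpha> mult_mono[of 1 "2 + 1 / \<alpha>" 1 ?a] by simp
    finally show "real (bag_size n \<beta> k) \<le> (2 + 1 / \<alpha>) * ?a" .
  qed
qed

lemma stop_bag_sizes:
  assumes m: "1 \<le> m" and stop: "\<not> loop_cond n m (\<lambda>_. 1) 2 \<beta>"
    and k0: "k0 < m" "2 \<le> bag_size n \<beta> k0"
  shows "\<forall>k<m. bag_size n \<beta> k \<le> 2 * min_bag_size n m \<beta>"
proof -
  have large: "bag_size n \<beta> k \<le> 2 * min_bag_size n m \<beta>" if "k < m" "2 \<le> bag_size n \<beta> k" for k
    using stop that unfolding loop_cond_unit_iff[OF m] by (auto simp: not_less)
  from large[OF k0] k0(2) have one: "1 \<le> min_bag_size n m \<beta>" by linarith
  show ?thesis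
  proof (intro allI impI)
    fix k assume "k < m"
    then show "bag_size n \<beta> k \<le> 2 * min_bag_size n m \<beta>"
      using large[of k] one by (cases "2 \<le> bag_size n \<beta> k") auto
  qed
qed

section \<open>Consistency, robustness and termination\<close>

lemma ipr_output_invariant:
  assumes m: "1 \<le> m" and \<alpha>: "0 \<le> \<alpha>" and sh: "\<forall>i<m. 0 \<le> sh i"
    and out: "ipr_output n m (\<lambda>_. 1) sh \<epsilon> \<alpha> 2 \<beta>"
  obtains \<beta>0 c where "ipr_init n m (\<lambda>_. 1) sh \<epsilon> \<beta>0"
    and "ipr_invariant n m sh \<alpha> (makespan n m (\<lambda>_. 1) sh \<beta>0) (\<beta>, c)"
    and "\<not> loop_cond n m (\<lambda>_. 1) 2 \<beta> \<or> loop_cond n m (\<lambda>_. 1) 2 \<beta> \<and>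
      (\<exists>st'. lpt_rebalance n m (\<lambda>_. 1) (\<beta>, c) st' \<and>
        ereal (1 + \<alpha>) * makespan n m (\<lambda>_. 1) sh \<beta>0 < coll_makespan n m (\<lambda>_. 1) sh st')"
proof -
  obtain \<beta>0 where init: "ipr_init n m (\<lambda>_. 1) sh \<epsilon> \<beta>0"
    and run: "ipr_run n m (\<lambda>_. 1) sh \<alpha> 2 (makespan n m (\<lambda>_. 1) sh \<beta>0) (\<beta>0, id) \<beta>"
    using out by (auto simp: ipr_output_def)
  have "\<exists>c. ipr_invariant n m sh \<alpha> (makespan n m (\<lambda>_. 1) sh \<beta>0) (\<beta>, c) \<and>
      (\<not> loop_cond n m (\<lambda>_. 1) 2 \<beta> \<or> loop_cond n m (\<lambda>_. 1) 2 \<beta> \<and>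
      (\<exists>st'. lpt_rebalance n m (\<lambda>_. 1) (\<beta>, c) st' \<and>
        ereal (1 + \<alpha>) * makespan n m (\<lambda>_. 1) sh \<beta>0 < coll_makespan n m (\<lambda>_. 1) sh st'))"
    using run ipr_invariant_init[OF m \<alpha> sh init]
    by (rule ipr_run_invariant) (rule ipr_invariant_step)
  then show thesis using that init by blast
qed

lemma ipr_consistent:
  assumes m: "1 \<le> m" and \<alpha>: "0 \<le> \<alpha>" and s: "\<forall>i<m. 0 < s i"
    and out: "ipr_output n m (\<lambda>_. 1) s \<epsilon> \<alpha> 2 \<beta>"
  shows "bag_makespan n m (\<lambda>_. 1) s \<beta> \<le> ereal ((1 + \<epsilon>) * (1 + \<alpha>)) * opt n m (\<lambda>_. 1) s"
proof -
  have "\<forall>i<m. 0 \<le> s i" using s by (simp add: less_imp_le)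
  then obtain \<beta>0 c where init: "ipr_init n m (\<lambda>_. 1) s \<epsilon> \<beta>0"
    and inv: "ipr_invariant n m s \<alpha> (makespan n m (\<lambda>_. 1) s \<beta>0) (\<beta>, c)"
    using ipr_output_invariant[OF m \<alpha> _ out] by metis
  have "bag_makespan n m (\<lambda>_. 1) s \<beta> \<le> coll_makespan n m (\<lambda>_. 1) s (\<beta>, c)"
    using inv by (simp add: balanced_state_def bag_makespan_le_coll_makespan)
  also have "\<dots> \<le> ereal (1 + \<alpha>) * makespan n m (\<lambda>_. 1) s \<beta>0"
    using inv by simp
  also have "\<dots> \<le> ereal (1 + \<alpha>) * (ereal (1 + \<epsilon>) * opt n m (\<lambda>_. 1) s)"
    using init \<alpha> by (intro ereal_mult_left_mono) (auto simp: ipr_init_def)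
  also have "\<dots> = ereal ((1 + \<epsilon>) * (1 + \<alpha>)) * opt n m (\<lambda>_. 1) s"
    by (simp add: mult.assoc[symmetric] mult.commute)
  finally show ?thesis .
qed

lemma ipr_output_bag_sizes:
  assumes m: "1 \<le> m" and \<alpha>: "0 < \<alpha>" and sh: "\<forall>i<m. 0 \<le> sh i"
    and out: "ipr_output n m (\<lambda>_. 1) sh \<epsilon> \<alpha> 2 \<beta>"
  shows "\<forall>j<n. \<beta> j < m"
    and "(\<forall>k<m. bag_size n \<beta> k \<le> 1) \<or>
      (\<forall>k<m. real (bag_size n \<beta> k) \<le> (2 + 1 / \<alpha>) * min_bag_size n m \<beta>)"
proof -
  obtain \<beta>0 c where inv: "ipr_invariant n m sh \<alpha> (makespan n m (\<lambda>_. 1) sh \<beta>0) (\<beta>, c)"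
    and final: "\<not> loop_cond n m (\<lambda>_. 1) 2 \<beta> \<or> loop_cond n m (\<lambda>_. 1) 2 \<beta> \<and>
      (\<exists>st'. lpt_rebalance n m (\<lambda>_. 1) (\<beta>, c) st' \<and>
        ereal (1 + \<alpha>) * makespan n m (\<lambda>_. 1) sh \<beta>0 < coll_makespan n m (\<lambda>_. 1) sh st')"
    using ipr_output_invariant[OF m _ sh out] \<alpha> by (metis less_imp_le)
  show "\<forall>j<n. \<beta> j < m" using inv by (simp add: balanced_state_def)
  let ?a = "real (min_bag_size n m \<beta>)"
  show "(\<forall>k<m. bag_size n \<beta> k \<le> 1) \<or> (\<forall>k<m. real (bag_size n \<beta> k) \<le> (2 + 1 / \<alpha>) * ?a)"
  proof (cases "\<forall>k<m. bag_size n \<beta> k \<le> 1")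
    case False
    then obtain k0 where k0: "k0 < m" "2 \<le> bag_size n \<beta> k0" by force
    from final have "\<forall>k<m. real (bag_size n \<beta> k) \<le> (2 + 1 / \<alpha>) * ?a"
    proof
      assume "\<not> loop_cond n m (\<lambda>_. 1) 2 \<beta>"
      from stop_bag_sizes[OF m this k0] have "\<forall>k<m. real (bag_size n \<beta> k) \<le> 2 * ?a"
        by (metis of_nat_le_iff of_nat_mult of_nat_numeral)
      moreover have "2 * ?a \<le> (2 + 1 / \<alpha>) * ?a" using \<alpha> by (simp add: mult_right_mono)
      ultimately show ?thesis by (meson order_trans)
    next
      assume "loop_cond n m (\<lambda>_. 1) 2 \<beta> \<and> (\<exists>st'. lpt_rebalance n m (\<lambda>_. 1) (\<beta>, c) st' \<and>
        ereal (1 + \<alpha>) * makespan n m (\<lambda>_. 1) sh \<beta>0 < coll_makespan n m (\<lambda>_. 1) sh st')"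
      then show ?thesis
        using rejected_step_bag_sizes[OF \<alpha> sh makespan_nonneg[OF m] inv] by fastforce
    qed
    then show ?thesis by simp
  qed simp
qed

lemma ipr_robust:
  assumes m: "1 \<le> m" and \<alpha>: "0 < \<alpha>" and sh: "\<forall>i<m. 0 \<le> sh i" and s: "\<forall>i<m. 0 < s i"
    and out: "ipr_output n m (\<lambda>_. 1) sh \<epsilon> \<alpha> 2 \<beta>"
  shows "bag_makespan n m (\<lambda>_. 1) s \<beta> \<le> ereal (2 + 1 / \<alpha>) * opt n m (\<lambda>_. 1) s"
  using ipr_output_bag_sizes(2)[OF m \<alpha> sh out]
proof
  assume "\<forall>k<m. bag_size n \<beta> k \<le> 1"
  then have "bag_makespan n m (\<lambda>_. 1) s \<beta> \<le> opt n m (\<lambda>_. 1) s"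
    using bag_makespan_le_opt_if_singleton_bags[OF m ipr_output_bag_sizes(1)[OF m \<alpha> sh out]]
    by (simp add: bag_size_def)
  also have "\<dots> \<le> ereal (2 + 1 / \<alpha>) * opt n m (\<lambda>_. 1) s"
    using ereal_mult_right_mono[of 1 "ereal (2 + 1 / \<alpha>)" "opt n m (\<lambda>_. 1) s"] opt_nonneg[OF m] \<alpha>
    by simp
  finally show ?thesis .
next
  assume "\<forall>k<m. real (bag_size n \<beta> k) \<le> (2 + 1 / \<alpha>) * min_bag_size n m \<beta>"
  then show ?thesis
    using bag_makespan_le_if_bag_sizes_within_factor[OF m s ipr_output_bag_sizes(1)[OF m \<alpha> sh out],
        of "2 + 1 / \<alpha>" "real (min_bag_size n m \<beta>)"] \<alpha> min_bag_size_le
    by simp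
qed

lemma ipr_terminates:
  assumes "ipr_init n m (\<lambda>_. 1) sh \<epsilon> \<beta>0"
  shows "\<nexists>f. f 0 = (\<beta>0, id) \<and> (\<forall>k. ipr_step n m (\<lambda>_. 1) sh \<alpha> 2 OPTC (f k) (f (Suc k)))"
  using assms by (intro ipr_step_terminates) (simp add: ipr_init_def balanced_state_def)

theorem theorem3:
  fixes n m :: nat and \<epsilon> \<alpha> :: real
  assumes "1 \<le> m" and "0 < \<epsilon>" and "\<epsilon> < 1" and "0 < \<alpha>" and "\<alpha> < 1"
  shows
    \<comment> \<open>consistency: predicted speeds equal true speeds\<close>
    "(\<forall>s. (\<forall>i<m. 0 < s i) \<longrightarrow> (\<forall>i j. i \<le> j \<longrightarrow> j < m \<longrightarrow> s j \<le> s i) \<longrightarrow>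
        (\<forall>\<beta>. ipr_output n m (\<lambda>_. 1) s \<epsilon> \<alpha> 2 \<beta> \<longrightarrow>
           bag_makespan n m (\<lambda>_. 1) s \<beta> \<le> ereal ((1 + \<epsilon>) * (1 + \<alpha>)) * opt n m (\<lambda>_. 1) s))
     \<and>
     \<comment> \<open>robustness: arbitrary predictions, arbitrary true speeds\<close>
     (\<forall>sh s. (\<forall>i<m. 0 \<le> sh i) \<longrightarrow> (\<forall>i j. i \<le> j \<longrightarrow> j < m \<longrightarrow> sh j \<le> sh i) \<longrightarrow>
        (\<forall>i<m. 0 < s i) \<longrightarrow>
        (\<forall>\<beta>. ipr_output n m (\<lambda>_. 1) sh \<epsilon> \<alpha> 2 \<beta> \<longrightarrow>
           bag_makespan n m (\<lambda>_. 1) s \<beta> \<le> ereal (2 + 1 / \<alpha>) * opt n m (\<lambda>_. 1) s))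
     \<and>
     \<comment> \<open>IPR is an algorithm: the while loop always terminates\<close>
     (\<forall>sh \<beta>0. (\<forall>i<m. 0 \<le> sh i) \<longrightarrow> (\<forall>i j. i \<le> j \<longrightarrow> j < m \<longrightarrow> sh j \<le> sh i) \<longrightarrow>
        ipr_init n m (\<lambda>_. 1) sh \<epsilon> \<beta>0 \<longrightarrow>
        \<not> (\<exists>f. f 0 = (\<beta>0, id) \<and>
              (\<forall>k. ipr_step n m (\<lambda>_. 1) sh \<alpha> 2 (makespan n m (\<lambda>_. 1) sh \<beta>0) (f k) (f (Suc k)))))"
proof (intro conjI allI impI)
  fix s :: "nat \<Rightarrow> real" and \<beta> :: "nat \<Rightarrow> nat"
  assume "\<forall>i<m. 0 < s i" and "\<forall>i j. i \<le> j \<longrightarrow> j < m \<longrightarrow> s j \<le> s i"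
    and "ipr_output n m (\<lambda>_. 1) s \<epsilon> \<alpha> 2 \<beta>"
  then show "bag_makespan n m (\<lambda>_. 1) s \<beta> \<le> ereal ((1 + \<epsilon>) * (1 + \<alpha>)) * opt n m (\<lambda>_. 1) s"
    using assms by (intro ipr_consistent) auto
next
  fix sh s :: "nat \<Rightarrow> real" and \<beta> :: "nat \<Rightarrow> nat"
  assume "\<forall>i<m. 0 \<le> sh i" and "\<forall>i j. i \<le> j \<longrightarrow> j < m \<longrightarrow> sh j \<le> sh i"
    and "\<forall>i<m. 0 < s i" and "ipr_output n m (\<lambda>_. 1) sh \<epsilon> \<alpha> 2 \<beta>"
  then show "bag_makespan n m (\<lambda>_. 1) s \<beta> \<le> ereal (2 + 1 / \<alpha>) * opt n m (\<lambda>_. 1) s"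
    using assms by (intro ipr_robust) auto
next
  fix sh :: "nat \<Rightarrow> real" and \<beta>0 :: "nat \<Rightarrow> nat"
  assume "\<forall>i<m. 0 \<le> sh i" and "\<forall>i j. i \<le> j \<longrightarrow> j < m \<longrightarrow> sh j \<le> sh i"
    and init: "ipr_init n m (\<lambda>_. 1) sh \<epsilon> \<beta>0"
  from init show "\<nexists>f. f 0 = (\<beta>0, id) \<and>
      (\<forall>k. ipr_step n m (\<lambda>_. 1) sh \<alpha> 2 (makespan n m (\<lambda>_. 1) sh \<beta>0) (f k) (f (Suc k)))"
    by (rule ipr_terminates)
qed

end
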